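(* Let $G$ be a non-discrete locally compact unimodular group with Haar measure $\nu$. For every compact set $B\subseteq G$ and every neighborhood $U$ of the identity there exist a compact set $C\supseteq B$ and a finite set $F\subseteq C$ such that $C\subseteq FU$ and for every $I\subseteq F$, $$\nu(IU\cap C)\ge \frac{|I|}{|F|}\,\nu(C).$$ *)

theory Defs
  imports "HOL-Analysis.Analysis"
begin

(* Groups are written additively: the type class topological_group_add is a
   (not necessarily commutative) group with continuous operations. *)

definition locally_compact_group :: "'a::{topological_group_add,t2_space} itself \<Rightarrow> bool" where
  "locally_compact_group _ \<longleftrightarrow>
     (\<forall>x::'a. \<exists>V K. open V \<and> compact K \<and> x \<in> V \<and> V \<subseteq> K)"

definition non_discrete :: "'a::topological_space itself \<Rightarrow> bool" where
  "non_discrete _ \<longleftrightarrow> \<not> (\<forall>x::'a. open {x})"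

definition haar_measure :: "'a::{topological_group_add,t2_space} measure \<Rightarrow> bool" where
  "haar_measure \<nu> \<longleftrightarrow>
     sets \<nu> = sets borel \<and>
     (\<forall>g A. A \<in> sets borel \<longrightarrow> emeasure \<nu> ((\<lambda>x. g + x) ` A) = emeasure \<nu> A) \<and>
     (\<forall>K. compact K \<longrightarrow> emeasure \<nu> K < \<infinity>) \<and>
     (\<forall>V. open V \<and> V \<noteq> {} \<longrightarrow> emeasure \<nu> V > 0) \<and>
     (\<forall>A \<in> sets borel. emeasure \<nu> A = (INF V\<in>{V. open V \<and> A \<subseteq> V}. emeasure \<nu> V)) \<and>
     (\<forall>V. open V \<longrightarrow> emeasure \<nu> V = (SUP K\<in>{K. compact K \<and> K \<subseteq> V}. emeasure \<nu> K))"

text \<open>Unimodular: the (left) Haar measure is also right invariant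
  (equivalently, the modular function is identically 1).\<close>
definition unimodular_haar :: "'a::{topological_group_add,t2_space} measure \<Rightarrow> bool" where
  "unimodular_haar \<nu> \<longleftrightarrow> haar_measure \<nu> \<and>
     (\<forall>g A. A \<in> sets borel \<longrightarrow> emeasure \<nu> ((\<lambda>x. x + g) ` A) = emeasure \<nu> A)"

definition setprod :: "'a::plus set \<Rightarrow> 'a set \<Rightarrow> 'a set" where
  "setprod F U = {f + u | f u. f \<in> F \<and> u \<in> U}"

end

theory Submission
  imports Defs
begin

text \<open>
  Write \<open>V\<^sup>n\<close> for the \<open>n\<close>-fold product set \<open>V + \<dots> + V\<close>. Choose a symmetric open neighbourhood
  \<open>V\<close> of \<open>0\<close> with compact closure and \<open>V\<^sup>8 \<subseteq> U\<close>. Finitely many cosets of the open subgroup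
  generated by \<open>V\<close> meet \<open>B\<close>, so \<open>B\<close> is covered by disjoint translates of one compact piece
  \<open>D = closure (V\<^bsup>N+1\<^esup>)\<close>, and it suffices to treat \<open>D\<close>.

  In \<open>D\<close> take a maximal \<open>V\<^sup>2\<close>-separated set \<open>G\<close> and a Borel partition of \<open>D\<close> into cells
  \<open>Q g \<subseteq> g + V\<^sup>2\<close>, each containing the nonempty open set \<open>V\<^bsup>N+1\<^esup> \<inter> (g + V)\<close>. Call \<open>g\<close> and
  \<open>h\<close> adjacent when \<open>-g + h \<in> V\<^sup>5\<close>. As \<open>V\<^bsup>N+1\<^esup>\<close> is reached from \<open>0\<close> by steps in \<open>V\<close>, the
  adjacency graph is connected, which allows rounding the cell measures to multiplicities
  \<open>k g \<ge> 1\<close> such that every set \<open>A\<close> of cells satisfies \<open>k(A) \<nu>(D) / k(G) \<le> \<nu>(Q(N(A)))\<close>, \<open>N(A)\<close>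
  being the cells adjacent to \<open>A\<close>. Let \<open>F\<close> consist of \<open>k g\<close> points of each \<open>V\<^bsup>N+1\<^esup> \<inter> (g + V)\<close>,
  which is infinite as the group is not discrete. A point near \<open>g\<close> covers, via \<open>U\<close>, every cell
  adjacent to \<open>g\<close>, so a set \<open>I \<subseteq> F\<close> meeting the clusters of \<open>A\<close> has \<open>I U \<supseteq> Q(N(A))\<close> and
  \<open>card I \<le> k(A)\<close>.
\<close>

lemma translation_eq_vimage:
  fixes x :: "'a::group_add"
  shows "(\<lambda>y. x + y) ` S = (\<lambda>y. -x + y) -` S"
  by (force simp: add.assoc[symmetric])

lemma mem_translation_iff:
  fixes x :: "'a::group_add"
  shows "y \<in> (\<lambda>z. x + z) ` S \<longleftrightarrow> -x + y \<in> S"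
  by (simp add: translation_eq_vimage)

lemma open_left_translation:
  fixes S :: "'a::topological_group_add set"
  shows "open S \<Longrightarrow> open ((\<lambda>y. x + y) ` S)"
  unfolding translation_eq_vimage by (intro open_vimage continuous_intros)

lemma compact_left_translation:
  fixes S :: "'a::topological_group_add set"
  shows "compact S \<Longrightarrow> compact ((\<lambda>y. x + y) ` S)"
  by (intro compact_continuous_image continuous_intros)

lemma mem_setprod_iff:
  fixes F :: "'a::group_add set"
  shows "y \<in> setprod F U \<longleftrightarrow> (\<exists>f\<in>F. -f + y \<in> U)"
  unfolding setprod_def by (force simp: add.assoc[symmetric])

lemma setprod_eq_UN: "setprod F U = (\<Union>f\<in>F. (\<lambda>u. f + u) ` U)"
  unfolding setprod_def by auto

lemma setprod_insert: "setprod (insert a F) U = setprod {a} U \<union> setprod F U"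
  unfolding setprod_def by blast

lemma setprod_mono: "F \<subseteq> F' \<Longrightarrow> U \<subseteq> U' \<Longrightarrow> setprod F U \<subseteq> setprod F' U'"
  unfolding setprod_def by blast

lemma open_setprod:
  fixes U :: "'a::topological_group_add set"
  shows "open U \<Longrightarrow> open (setprod F U)"
  unfolding setprod_eq_UN by (intro open_UN ballI open_left_translation)

lemma compact_setprod:
  fixes A B :: "'a::topological_group_add set"
  assumes "compact A" "compact B"
  shows "compact (setprod A B)"
proof -
  have "setprod A B = (\<lambda>p. fst p + snd p) ` (A \<times> B)"
    unfolding setprod_def by force
  moreover have "compact ((\<lambda>p. fst p + snd p) ` (A \<times> B))"
    by (intro compact_continuous_image compact_Times assms continuous_intros)
  ultimately show ?thesis
    by simp
qed

lemma left_translation_setprod: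
  fixes x :: "'a::group_add"
  shows "(\<lambda>y. x + y) ` setprod F U = setprod ((\<lambda>y. x + y) ` F) U"
  by (auto simp: set_eq_iff mem_setprod_iff mem_translation_iff minus_add add.assoc
      simp del: add_uminus_conv_diff)

fun setprod_pow :: "'a::monoid_add set \<Rightarrow> nat \<Rightarrow> 'a set" where
  "setprod_pow V 0 = {0}"
| "setprod_pow V (Suc n) = setprod (setprod_pow V n) V"

lemma setprod_zero_left [simp]:
  fixes V :: "'a::monoid_add set"
  shows "setprod {0} V = V"
  by (auto simp: setprod_def)

lemma setprod_pow_add:
  assumes "x \<in> setprod_pow V m" "y \<in> setprod_pow V n" "m + n = k"
  shows "x + y \<in> setprod_pow V k"
  using assms(2,3)
proof (induction n arbitrary: y k)
  case 0
  then show ?case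
    using assms(1) by simp
next
  case (Suc n)
  then obtain z v where "z \<in> setprod_pow V n" "v \<in> V" "y = z + v"
    by (auto simp: setprod_def)
  with Suc.IH have "x + z \<in> setprod_pow V (m + n)"
    by blast
  then have "(x + z) + v \<in> setprod_pow V (Suc (m + n))"
    using \<open>v \<in> V\<close> unfolding setprod_pow.simps setprod_def by blast
  then show ?case
    using Suc.prems(2)[symmetric] \<open>y = z + v\<close> by (simp add: add.assoc)
qed

lemma setprod_pow_uminus:
  fixes V :: "'a::group_add set"
  assumes "\<forall>v\<in>V. -v \<in> V"
  shows "x \<in> setprod_pow V n \<Longrightarrow> -x \<in> setprod_pow V n"
proof (induction n arbitrary: x)
  case (Suc n)
  then obtain z v where "z \<in> setprod_pow V n" "v \<in> V" "x = z + v"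
    by (auto simp: setprod_def)
  have "-v \<in> setprod_pow V 1"
    using assms \<open>v \<in> V\<close> by simp
  moreover have "-z \<in> setprod_pow V n"
    using Suc.IH \<open>z \<in> setprod_pow V n\<close> .
  ultimately have "-v + -z \<in> setprod_pow V (Suc n)"
    by (rule setprod_pow_add) simp
  then show ?case
    using \<open>x = z + v\<close> by (simp add: minus_add)
qed simp

lemma zero_mem_setprod_pow: "0 \<in> V \<Longrightarrow> 0 \<in> setprod_pow V n"
  by (induction n) (force simp: setprod_def)+

lemma setprod_pow_mono:
  assumes "0 \<in> V" "m \<le> n"
  shows "setprod_pow V m \<subseteq> setprod_pow V n"
proof
  fix x assume "x \<in> setprod_pow V m"
  moreover have "0 \<in> setprod_pow V (n - m)"
    using assms(1) by (rule zero_mem_setprod_pow)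
  ultimately have "x + 0 \<in> setprod_pow V n"
    by (rule setprod_pow_add) (use assms(2) in simp)
  then show "x \<in> setprod_pow V n"
    by simp
qed

lemma setprod_pow_mono_set: "V \<subseteq> W \<Longrightarrow> setprod_pow V n \<subseteq> setprod_pow W n"
  by (induction n) (simp_all add: setprod_mono)

lemma open_setprod_pow:
  fixes V :: "'a::topological_group_add set"
  shows "open V \<Longrightarrow> 0 < n \<Longrightarrow> open (setprod_pow V n)"
  by (cases n) (simp_all add: open_setprod)

lemma compact_setprod_pow:
  fixes K :: "'a::topological_group_add set"
  shows "compact K \<Longrightarrow> compact (setprod_pow K n)"
  by (induction n) (simp_all add: compact_setprod)

lemma closure_setprod_pow_subset:
  fixes V :: "'a::topological_group_add set"
  assumes "open V" "0 \<in> V" "\<forall>v\<in>V. -v \<in> V"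
  shows "closure (setprod_pow V n) \<subseteq> setprod_pow V (Suc n)"
proof
  fix x assume "x \<in> closure (setprod_pow V n)"
  moreover have "open ((\<lambda>v. x + v) ` V)" "x \<in> (\<lambda>v. x + v) ` V"
    using assms by (auto intro: open_left_translation image_eqI[of _ _ 0])
  ultimately have "(\<lambda>v. x + v) ` V \<inter> setprod_pow V n \<noteq> {}"
    using open_Int_closure_eq_empty by blast
  then obtain v where "v \<in> V" "x + v \<in> setprod_pow V n"
    by blast
  moreover have "x = (x + v) + -v"
    by (simp add: add.assoc)
  ultimately show "x \<in> setprod_pow V (Suc n)"
    using assms(3) unfolding setprod_pow.simps setprod_def by blast
qed

lemma exists_nhd_setprod_subset:
  fixes U :: "'a::topological_group_add set"
  assumes "open U" "0 \<in> U"
  shows "\<exists>W. open W \<and> 0 \<in> W \<and> setprod W W \<subseteq> U"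
proof -
  have "open ((\<lambda>p::'a \<times> 'a. fst p + snd p) -` U)"
    using assms(1) by (intro open_vimage continuous_intros)
  moreover have "(0, 0) \<in> (\<lambda>p::'a \<times> 'a. fst p + snd p) -` U"
    using assms(2) by simp
  ultimately obtain A B where "open A" "open B" "(0, 0) \<in> A \<times> B"
      "A \<times> B \<subseteq> (\<lambda>p. fst p + snd p) -` U"
    by (rule open_prod_elim)
  then show ?thesis
    by (intro exI[of _ "A \<inter> B"]) (auto simp: setprod_def)
qed

lemma exists_symmetric_nhd_setprod_pow:
  fixes U :: "'a::topological_group_add set"
  assumes "open U" "0 \<in> U"
  shows "\<exists>W. open W \<and> 0 \<in> W \<and> (\<forall>w\<in>W. -w \<in> W) \<and> setprod_pow W n \<subseteq> U"
  using assms
proof (induction n arbitrary: U)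
  case 0
  then show ?case
    by (intro exI[of _ UNIV]) auto
next
  case (Suc n)
  obtain W1 where W1: "open W1" "0 \<in> W1" "setprod W1 W1 \<subseteq> U"
    using exists_nhd_setprod_subset[OF Suc.prems] by blast
  obtain W2 where W2: "open W2" "0 \<in> W2" "\<forall>w\<in>W2. -w \<in> W2" "setprod_pow W2 n \<subseteq> W1"
    using Suc.IH[OF W1(1,2)] by blast
  define W where "W = W2 \<inter> W1 \<inter> uminus -` W1"
  have "open W"
    unfolding W_def using W1(1) W2(1) by (intro open_Int open_vimage continuous_intros)
  moreover have "setprod_pow W (Suc n) \<subseteq> U"
  proof -
    have "setprod_pow W n \<subseteq> W1"
      using W2(4) setprod_pow_mono_set[of W W2 n] by (auto simp: W_def)
    then have "setprod_pow W (Suc n) \<subseteq> setprod W1 W1"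
      unfolding setprod_pow.simps by (rule setprod_mono) (auto simp: W_def)
    then show ?thesis
      using W1(3) by blast
  qed
  ultimately show ?case
    using W1(2) W2(2,3) by (intro exI[of _ W]) (auto simp: W_def)
qed

lemma infinite_open_non_discrete:
  fixes S :: "'a::{topological_group_add,t2_space} set"
  assumes "non_discrete TYPE('a)" "open S" "S \<noteq> {}"
  shows "infinite S"
proof
  assume "finite S"
  obtain s where "s \<in> S"
    using assms(3) by blast
  have "open (S - (S - {s}))"
    using assms(2) \<open>finite S\<close> by (intro open_Diff finite_imp_closed) auto
  moreover have "S - (S - {s}) = {s}"
    using \<open>s \<in> S\<close> by blast
  ultimately have "open {s}"
    by simp
  have "open {x}" for x :: 'a
    using open_left_translation[OF \<open>open {s}\<close>, of "x + -s"] by (simp add: add.assoc)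
  then show False
    using assms(1) unfolding non_discrete_def by blast
qed

lemma haar_measureD:
  fixes \<nu> :: "'a::{topological_group_add,t2_space} measure"
  assumes "haar_measure \<nu>"
  shows sets_haar: "sets \<nu> = sets borel"
    and emeasure_haar_left_translation:
      "A \<in> sets borel \<Longrightarrow> emeasure \<nu> ((\<lambda>x. g + x) ` A) = emeasure \<nu> A"
    and emeasure_haar_compact_finite: "compact K \<Longrightarrow> emeasure \<nu> K < \<infinity>"
    and emeasure_haar_open_pos: "open V \<Longrightarrow> V \<noteq> {} \<Longrightarrow> emeasure \<nu> V > 0"
  using assms unfolding haar_measure_def by (elim conjE; fast)+

context
  fixes \<nu> :: "'a::{topological_group_add,t2_space} measure"
  assumes haar: "haar_measure \<nu>"
begin

lemma fmeasurable_haar: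
  assumes "compact K" "A \<subseteq> K" "A \<in> sets borel"
  shows "A \<in> fmeasurable \<nu>"
proof (rule fmeasurableI)
  show "A \<in> sets \<nu>"
    using assms(3) sets_haar[OF haar] by simp
  have "K \<in> sets \<nu>"
    using assms(1) sets_haar[OF haar] by (simp add: borel_closed compact_imp_closed)
  then have "emeasure \<nu> A \<le> emeasure \<nu> K"
    by (rule emeasure_mono[OF assms(2)])
  also have "\<dots> < \<infinity>"
    using emeasure_haar_compact_finite[OF haar assms(1)] .
  finally show "emeasure \<nu> A < \<infinity>" .
qed

lemma measure_haar_left_translation:
  "A \<in> sets borel \<Longrightarrow> measure \<nu> ((\<lambda>y. x + y) ` A) = measure \<nu> A"
  by (simp add: measure_def emeasure_haar_left_translation[OF haar])

lemma fmeasurable_haar_setprod_Int: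
  fixes U :: "'a set"
  assumes "open U" "compact C"
  shows "setprod I U \<inter> C \<in> fmeasurable \<nu>"
proof (rule fmeasurable_haar[OF assms(2)])
  have "setprod I U \<in> sets borel" "C \<in> sets borel"
    using assms by (simp_all add: borel_open borel_closed open_setprod compact_imp_closed)
  then show "setprod I U \<inter> C \<in> sets borel"
    by (rule sets.Int)
qed auto

lemma measure_haar_pos:
  assumes "open A" "A \<noteq> {}" "A \<subseteq> B" "B \<in> sets borel" "compact K" "B \<subseteq> K"
  shows "measure \<nu> B > 0"
proof -
  have "A \<in> fmeasurable \<nu>"
    using fmeasurable_haar[OF assms(5) order_trans[OF assms(3,6)] borel_open[OF assms(1)]] .
  moreover have "B \<in> fmeasurable \<nu>"
    using fmeasurable_haar[OF assms(5,6,4)] .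
  moreover have "emeasure \<nu> A > 0"
    using emeasure_haar_open_pos[OF haar assms(1,2)] .
  ultimately have "measure \<nu> A > 0"
    by (simp add: emeasure_eq_measure2)
  also have "measure \<nu> A \<le> measure \<nu> B"
    using \<open>A \<in> fmeasurable \<nu>\<close> \<open>B \<in> fmeasurable \<nu>\<close> assms(3) by (intro measure_mono_fmeasurable) auto
  finally show ?thesis .
qed

end

lemma nat_floor_divide_bounds:
  fixes x m :: real
  assumes "0 < m" "m \<le> x"
  shows "1 \<le> nat \<lfloor>x / m\<rfloor>" "real (nat \<lfloor>x / m\<rfloor>) * m \<le> x" "x - m < real (nat \<lfloor>x / m\<rfloor>) * m"
proof -
  have "1 \<le> x / m"
    using assms by simp
  then have "1 \<le> nat \<lfloor>x / m\<rfloor>" "real (nat \<lfloor>x / m\<rfloor>) \<le> x / m" "x / m < real (nat \<lfloor>x / m\<rfloor>) + 1"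
    by linarith+
  then show "1 \<le> nat \<lfloor>x / m\<rfloor>" "real (nat \<lfloor>x / m\<rfloor>) * m \<le> x" "x - m < real (nat \<lfloor>x / m\<rfloor>) * m"
    using assms(1) by (simp_all add: field_simps)
qed

text \<open>Round every weight but one down to a multiple of the unit \<open>m\<close>; the remaining vertex \<open>\<rho>\<close>
  absorbs the rounding error, and a set containing \<open>\<rho>\<close> is controlled through its complement.\<close>

lemma exists_rounded_multiplicities_unit:
  fixes q :: "'v \<Rightarrow> real" and X :: "'v set" and m :: real
  assumes X: "finite X" "\<rho> \<in> X" and q: "\<forall>j\<in>X. m \<le> q j" and "0 < m"
    and n: "real n * m = sum q X"
  shows "\<exists>k. (\<forall>j\<in>X. 1 \<le> k j) \<and> sum k X = n \<and>
           (\<forall>A\<subseteq>X. real (sum k A) * m \<le> sum q A + real (card X) * m)"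
proof -
  define k0 where "k0 j = nat \<lfloor>q j / m\<rfloor>" for j
  have k0_bounds: "1 \<le> k0 j" "real (k0 j) * m \<le> q j" "q j - m < real (k0 j) * m" if "j \<in> X" for j
    unfolding k0_def using nat_floor_divide_bounds[OF \<open>0 < m\<close>] q that by blast+
  define R where "R = X - {\<rho>}"
  have k0_sum_le: "real (sum k0 B) * m \<le> sum q B" if "B \<subseteq> X" for B
    unfolding of_nat_sum sum_distrib_right using that q k0_bounds by (intro sum_mono) auto
  have "real n * m = q \<rho> + sum q R"
    using X n by (simp add: R_def sum.remove)
  moreover have "q \<rho> > 0"
    using X(2) q \<open>0 < m\<close> by force
  ultimately have "real (sum k0 R) * m < real n * m"
    using k0_sum_le[of R] by (simp add: R_def del: of_nat_sum)
  then have "sum k0 R < n"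
    using \<open>0 < m\<close> by (simp del: of_nat_sum)
  define k where "k = k0(\<rho> := n - sum k0 R)"
  have k_R: "sum k B = sum k0 B" if "B \<subseteq> R" for B
    using that by (intro sum.cong) (auto simp: k_def R_def)
  have sum_k: "sum k X = n"
    using X k_R[of R] \<open>sum k0 R < n\<close> by (simp add: sum.remove k_def R_def)
  have "\<forall>j\<in>X. 1 \<le> k j"
    using k0_bounds q \<open>sum k0 R < n\<close> by (auto simp: k_def)
  moreover have "real (sum k A) * m \<le> sum q A + real (card X) * m" if "A \<subseteq> X" for A
  proof (cases "\<rho> \<in> A")
    case False
    then have "sum k A = sum k0 A"
      using that by (intro k_R) (auto simp: R_def)
    then have "real (sum k A) * m \<le> sum q A"
      using k0_sum_le[OF that] by (simp del: of_nat_sum)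
    then show ?thesis
      using \<open>0 < m\<close> by (simp add: add_increasing2)
  next
    case True
    have "sum q (X - A) - card (X - A) * m = (\<Sum>j\<in>X - A. q j - m)"
      by (simp add: sum_subtractf)
    also have "\<dots> \<le> (\<Sum>j\<in>X - A. real (k0 j) * m)"
      using k0_bounds q by (intro sum_mono less_imp_le) auto
    also have "\<dots> = real (sum k0 (X - A)) * m"
      by (simp add: of_nat_sum sum_distrib_right)
    also have "sum k0 (X - A) = sum k (X - A)"
      using True by (intro k_R[symmetric]) (auto simp: R_def)
    finally have "real n * m - real (sum k (X - A)) * m \<le> sum q A + card (X - A) * m"
      using X(1) that n by (simp add: sum.subset_diff[of A X])
    moreover have "real (sum k A) = real n - real (sum k (X - A))"
      using X(1) that sum_k by (simp add: sum.subset_diff[of A X] del: of_nat_sum)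
    moreover have "real (card (X - A)) * m \<le> card X * m"
      using X(1) \<open>0 < m\<close> by (intro mult_right_mono) (simp_all add: card_mono)
    ultimately show ?thesis
      by (simp add: left_diff_distrib del: of_nat_sum)
  qed
  ultimately show ?thesis
    using sum_k by blast
qed

lemma exists_rounded_multiplicities:
  fixes q :: "'v \<Rightarrow> real" and X :: "'v set"
  assumes X: "finite X" "X \<noteq> {}" and q: "\<forall>j\<in>X. q j > 0" and "\<epsilon> > 0"
  shows "\<exists>k. (\<forall>j\<in>X. 1 \<le> k j) \<and>
           (\<forall>A\<subseteq>X. real (sum k A) * (sum q X / sum k X) \<le> sum q A + \<epsilon>)"
proof -
  obtain \<rho> where "\<rho> \<in> X"
    using X(2) by blast
  define \<delta> where "\<delta> = min (\<epsilon> / card X) (Min (q ` X))"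
  have "sum q X > 0"
    using X q by (intro sum_pos) auto
  moreover have "\<delta> > 0"
    unfolding \<delta>_def using X q \<open>\<epsilon> > 0\<close> by (auto simp: card_gt_0_iff)
  ultimately have "\<delta> / sum q X > 0"
    by simp
  then obtain n where "n > 0" "inverse (real n) < \<delta> / sum q X"
    using ex_inverse_of_nat_less by blast
  define m where "m = sum q X / n"
  have "0 < m"
    using \<open>n > 0\<close> \<open>sum q X > 0\<close> by (simp add: m_def)
  have "m < sum q X * (\<delta> / sum q X)"
    using mult_strict_left_mono[OF \<open>inverse (real n) < \<delta> / sum q X\<close> \<open>sum q X > 0\<close>]
    by (simp add: m_def divide_inverse)
  then have "m < \<delta>"
    using \<open>sum q X > 0\<close> by simp
  have m_le: "\<forall>j\<in>X. m \<le> q j"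
  proof
    fix j assume "j \<in> X"
    have "Min (q ` X) \<le> q j"
      using X(1) \<open>j \<in> X\<close> by simp
    then show "m \<le> q j"
      using \<open>m < \<delta>\<close> by (simp add: \<delta>_def)
  qed
  have "real n * m = sum q X"
    using \<open>n > 0\<close> by (simp add: m_def)
  then obtain k where k: "\<forall>j\<in>X. 1 \<le> k j" "sum k X = n"
      "\<forall>A\<subseteq>X. real (sum k A) * m \<le> sum q A + real (card X) * m"
    using exists_rounded_multiplicities_unit[OF X(1) \<open>\<rho> \<in> X\<close> m_le \<open>0 < m\<close>] by blast
  have "m < \<epsilon> / card X" "card X > 0"
    using \<open>m < \<delta>\<close> X by (simp_all add: \<delta>_def card_gt_0_iff)
  then have "real (card X) * m \<le> \<epsilon>"
    by (metis less_imp_le mult.commute of_nat_0_less_iff pos_less_divide_eq)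
  have "real (sum k A) * (sum q X / sum k X) \<le> sum q A + \<epsilon>" if "A \<subseteq> X" for A
  proof -
    have "real (sum k A) * m \<le> sum q A + real (card X) * m"
      using k(3) that by blast
    then show ?thesis
      using \<open>real (card X) * m \<le> \<epsilon>\<close> unfolding m_def k(2) by linarith
  qed
  then show ?thesis
    using k(1) by blast
qed

lemma exists_hall_multiplicities:
  fixes q :: "'v \<Rightarrow> real" and E :: "('v \<times> 'v) set"
  assumes X: "finite X" "X \<noteq> {}" and q: "\<forall>j\<in>X. q j > 0"
    and E: "E \<subseteq> X \<times> X" "\<forall>j\<in>X. (j, j) \<in> E"
    and connected: "\<forall>A\<subseteq>X. A \<noteq> {} \<longrightarrow> E `` A \<subseteq> A \<longrightarrow> A = X"
  shows "\<exists>k. (\<forall>j\<in>X. 1 \<le> k j) \<and>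
           (\<forall>A\<subseteq>X. real (sum k A) * (sum q X / sum k X) \<le> sum q (E `` A))"
proof -
  have "Min (q ` X) > 0"
    using X q by simp
  then obtain k where k: "\<forall>j\<in>X. 1 \<le> k j"
      "\<forall>A\<subseteq>X. real (sum k A) * (sum q X / sum k X) \<le> sum q A + Min (q ` X)"
    using exists_rounded_multiplicities[OF X q \<open>Min (q ` X) > 0\<close>] by (elim exE conjE) (rule that)
  have "real (sum k A) * (sum q X / sum k X) \<le> sum q (E `` A)" if "A \<subseteq> X" for A
  proof (cases "E `` A \<subseteq> A")
    case True
    show ?thesis
    proof (cases "A = {}")
      case False
      then have "A = X"
        using connected that True by blast
      moreover from this have "E `` A = X"
        using E by blast
      moreover have "sum q X \<ge> 0"
        using q by (simp add: less_imp_le sum_nonneg)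
      ultimately show ?thesis
        by (cases "sum k X = 0") auto
    qed simp
  next
    case False
    then obtain i where i: "i \<in> E `` A" "i \<notin> A"
      by blast
    have "A \<subseteq> E `` A" "E `` A \<subseteq> X"
      using E that by blast+
    then have "sum q (insert i A) \<le> sum q (E `` A)"
      using i X(1) q by (intro sum_mono2) (auto intro: finite_subset less_imp_le)
    moreover have "Min (q ` X) \<le> q i"
      using X(1) i \<open>E `` A \<subseteq> X\<close> by auto
    moreover have "real (sum k A) * (sum q X / sum k X) \<le> sum q A + Min (q ` X)"
      using k(2) that by blast
    ultimately show ?thesis
      using i(2) finite_subset[OF that X(1)] by simp
  qed
  with k(1) show ?thesis
    by blast
qed

lemma compact_imp_finite_setprod_cover:
  fixes B V :: "'a::topological_group_add set"
  assumes "compact B" "open V" "0 \<in> V"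
  obtains X where "finite X" "B \<subseteq> setprod X V"
proof -
  have "B \<subseteq> (\<Union>b\<in>B. (\<lambda>v. b + v) ` V)"
    using assms(3) by force
  then obtain X where "X \<subseteq> B" "finite X" "B \<subseteq> (\<Union>x\<in>X. (\<lambda>v. x + v) ` V)"
    by (rule compactE_image[OF assms(1) open_left_translation[OF assms(2)]])
  then show ?thesis
    using that by (simp add: setprod_eq_UN)
qed

text \<open>A maximal \<open>V\<^sup>2\<close>-separated subset of \<open>D\<close>: its size is bounded by that of any finite
  \<open>V\<close>-cover of \<open>D\<close>, and maximality makes it a \<open>V\<^sup>2\<close>-cover.\<close>

lemma exists_separated_cover:
  fixes D V :: "'a::topological_group_add set"
  assumes "compact D" "open V" "0 \<in> V" and V_sym: "\<forall>v\<in>V. -v \<in> V"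
  obtains G where "finite G" "G \<subseteq> D" "D \<subseteq> setprod G (setprod_pow V 2)"
    "\<forall>g\<in>G. \<forall>h\<in>G. g \<noteq> h \<longrightarrow> -g + h \<notin> setprod_pow V 2"
proof -
  obtain Y where Y: "finite Y" "D \<subseteq> setprod Y V"
    by (rule compact_imp_finite_setprod_cover[OF assms(1-3)])
  define separated where
    "separated A \<longleftrightarrow> A \<subseteq> D \<and> (\<forall>g\<in>A. \<forall>h\<in>A. g \<noteq> h \<longrightarrow> -g + h \<notin> setprod_pow V 2)" for A
  have card_le: "finite A \<and> card A \<le> card Y" if sep: "separated A" for A
  proof -
    have "\<forall>a\<in>A. \<exists>y\<in>Y. -y + a \<in> V"
      using Y(2) sep by (auto simp: separated_def mem_setprod_iff)
    then obtain \<phi> where \<phi>: "\<forall>a\<in>A. \<phi> a \<in> Y \<and> -\<phi> a + a \<in> V"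
      by metis
    have "inj_on \<phi> A"
    proof (rule inj_onI, rule ccontr)
      fix a b assume ab: "a \<in> A" "b \<in> A" "\<phi> a = \<phi> b" "a \<noteq> b"
      have "-(-\<phi> a + a) \<in> setprod_pow V 1" "-\<phi> b + b \<in> setprod_pow V 1"
        using \<phi> ab(1,2) V_sym by auto
      then have "-(-\<phi> a + a) + (-\<phi> b + b) \<in> setprod_pow V 2"
        by (rule setprod_pow_add) simp
      then show False
        using sep ab unfolding separated_def by (simp add: minus_add add.assoc)
    qed
    then show ?thesis
      using \<phi> Y(1) by (auto intro: inj_on_finite card_inj_on_le)
  qed
  have "\<exists>G. separated G \<and> (\<forall>A. separated A \<longrightarrow> card A \<le> card G)"
  proof (rule Lattices_Big.ex_has_greatest_nat)
    show "separated {}"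
      by (simp add: separated_def)
    show "\<forall>A. separated A \<longrightarrow> card A < Suc (card Y)"
      using card_le by (simp add: less_Suc_eq_le)
  qed
  then obtain G where G: "separated G" and G_max: "\<forall>A. separated A \<longrightarrow> card A \<le> card G"
    by blast
  have "D \<subseteq> setprod G (setprod_pow V 2)"
  proof
    fix y assume "y \<in> D"
    show "y \<in> setprod G (setprod_pow V 2)"
    proof (rule ccontr)
      assume y: "y \<notin> setprod G (setprod_pow V 2)"
      then have "y \<notin> G"
        using zero_mem_setprod_pow[OF assms(3)] by (force simp: mem_setprod_iff)
      have "-y + g \<notin> setprod_pow V 2" if "g \<in> G" for g
        using y that setprod_pow_uminus[OF V_sym, of "-y + g"] by (auto simp: mem_setprod_iff minus_add)
      then have "separated (insert y G)"
        using G y \<open>y \<in> D\<close> by (auto simp: separated_def mem_setprod_iff)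
      then show False
        using G_max card_le[OF G] \<open>y \<notin> G\<close> by fastforce
    qed
  qed
  then show ?thesis
    using that G card_le[OF G] by (auto simp: separated_def)
qed

lemma exists_partition_between:
  fixes P W :: "'i \<Rightarrow> 'a set"
  assumes "finite I" "D \<in> sets M" and PW: "\<forall>i\<in>I. P i \<in> sets M \<and> W i \<in> sets M \<and> P i \<subseteq> W i"
    and "disjoint_family_on P I" "D \<subseteq> (\<Union>i\<in>I. W i)"
  obtains Q where "disjoint_family_on Q I" "(\<Union>i\<in>I. Q i) = D"
    "\<forall>i\<in>I. Q i \<in> sets M \<and> D \<inter> P i \<subseteq> Q i \<and> Q i \<subseteq> D \<inter> W i"
proof -
  obtain h :: "'i \<Rightarrow> nat" where h: "inj_on h I"
    using finite_imp_inj_to_nat_seg[OF assms(1)] by blast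
  define R where "R = D - (\<Union>i\<in>I. P i)"
  define Q where "Q i = (D \<inter> P i) \<union> (R \<inter> W i - (\<Union>j\<in>{j\<in>I. h j < h i}. W j))" for i
  have "disjoint_family_on Q I"
    unfolding disjoint_family_on_def
  proof (intro ballI impI)
    fix i j assume ij: "i \<in> I" "j \<in> I" "i \<noteq> j"
    then have "h i < h j \<or> h j < h i"
      using h by (metis inj_onD linorder_neqE_nat)
    then show "Q i \<inter> Q j = {}"
      using \<open>disjoint_family_on P I\<close> ij unfolding Q_def R_def disjoint_family_on_def by blast
  qed
  moreover have "(\<Union>i\<in>I. Q i) = D"
  proof
    show "(\<Union>i\<in>I. Q i) \<subseteq> D"
      by (auto simp: Q_def R_def)
    show "D \<subseteq> (\<Union>i\<in>I. Q i)"
    proof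
      fix x assume "x \<in> D"
      show "x \<in> (\<Union>i\<in>I. Q i)"
      proof (cases "x \<in> R")
        case True
        obtain i where "i \<in> I" "x \<in> W i"
          using \<open>x \<in> D\<close> assms(5) by blast
        then obtain i where i: "i \<in> I \<and> x \<in> W i" and least: "\<forall>j. j \<in> I \<and> x \<in> W j \<longrightarrow> h i \<le> h j"
          using ex_has_least_nat[of "\<lambda>i. i \<in> I \<and> x \<in> W i" i h] by blast
        then have "x \<in> Q i"
          using True by (force simp: Q_def)
        then show ?thesis
          using i by blast
      qed (use \<open>x \<in> D\<close> in \<open>auto simp: Q_def R_def\<close>)
    qed
  qed
  moreover have "\<forall>i\<in>I. Q i \<in> sets M"
    using PW assms(1,2) unfolding Q_def R_def by (intro ballI sets.Un sets.Int sets.Diff sets.finite_UN) auto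
  moreover have "\<forall>i\<in>I. D \<inter> P i \<subseteq> Q i \<and> Q i \<subseteq> D \<inter> W i"
    using PW by (auto simp: Q_def R_def)
  ultimately show ?thesis
    using that by blast
qed

definition nbhd_graph :: "'a::group_add set \<Rightarrow> 'a set \<Rightarrow> ('a \<times> 'a) set" where
  "nbhd_graph W G = {(g, h). g \<in> G \<and> h \<in> G \<and> -g + h \<in> W}"

lemma nbhd_graph_sym:
  fixes V :: "'a::group_add set"
  assumes "\<forall>v\<in>V. -v \<in> V" "(g, h) \<in> nbhd_graph (setprod_pow V n) G"
  shows "(h, g) \<in> nbhd_graph (setprod_pow V n) G"
  using assms setprod_pow_uminus[OF assms(1), of "-g + h" n] by (simp add: nbhd_graph_def minus_add)

text \<open>Walking from \<open>0\<close> to a point of \<open>V\<^bsup>N+1\<^esup>\<close> by steps in \<open>V\<close>, consecutive points lie in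
  cells \<open>g + V\<^sup>2\<close> and \<open>h + V\<^sup>2\<close> with \<open>-g + h \<in> V\<^sup>5\<close>, so the walk never leaves the cells of a
  closed set of vertices containing the cell of \<open>0\<close>.\<close>

lemma setprod_pow_subset_closed_cells:
  fixes V :: "'a::topological_group_add set"
  assumes V: "0 \<in> V" "\<forall>v\<in>V. -v \<in> V"
    and G: "closure (setprod_pow V (Suc N)) \<subseteq> setprod G (setprod_pow V 2)"
    and A: "A \<subseteq> G" "nbhd_graph (setprod_pow V 5) G `` A \<subseteq> A" "\<rho> \<in> A" "-\<rho> \<in> setprod_pow V 2"
    and "M \<le> Suc N"
  shows "setprod_pow V M \<subseteq> setprod A (setprod_pow V 2)"
  using \<open>M \<le> Suc N\<close>
proof (induction M)
  case 0
  then show ?case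
    using A(3,4) by (auto simp: mem_setprod_iff)
next
  case (Suc M)
  show ?case
  proof
    fix y assume "y \<in> setprod_pow V (Suc M)"
    then obtain z v where zv: "z \<in> setprod_pow V M" "v \<in> V" "y = z + v"
      by (auto simp: setprod_def)
    have "z \<in> setprod A (setprod_pow V 2)"
      using Suc.IH Suc.prems zv(1) by auto
    then obtain g where g: "g \<in> A" "-g + z \<in> setprod_pow V 2"
      by (auto simp: mem_setprod_iff)
    have "y \<in> closure (setprod_pow V (Suc N))"
      using Suc.prems setprod_pow_mono[OF V(1)] closure_subset \<open>y \<in> setprod_pow V (Suc M)\<close> by blast
    then have "y \<in> setprod G (setprod_pow V 2)"
      using G by blast
    then obtain h where h: "h \<in> G" "-h + y \<in> setprod_pow V 2"
      by (auto simp: mem_setprod_iff)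
    have "-g + z + v \<in> setprod_pow V 3"
      by (rule setprod_pow_add[OF g(2), of v 1]) (use zv(2) in simp_all)
    moreover have "-(-h + y) \<in> setprod_pow V 2"
      using h(2) setprod_pow_uminus V(2) by blast
    ultimately have "(-g + z + v) + -(-h + y) \<in> setprod_pow V 5"
      by (rule setprod_pow_add) simp
    then have "(g, h) \<in> nbhd_graph (setprod_pow V 5) G"
      using g(1) h(1) A(1) zv(3) by (auto simp: nbhd_graph_def minus_add add.assoc simp del: add_uminus_conv_diff)
    then show "y \<in> setprod A (setprod_pow V 2)"
      using A(2) g(1) h(2) by (auto simp: mem_setprod_iff)
  qed
qed

lemma nbhd_graph_closed_eq:
  fixes V :: "'a::topological_group_add set"
  assumes V: "open V" "0 \<in> V" "\<forall>v\<in>V. -v \<in> V"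
    and G: "G \<subseteq> closure (setprod_pow V (Suc N))" "closure (setprod_pow V (Suc N)) \<subseteq> setprod G (setprod_pow V 2)"
    and A: "A \<subseteq> G" "nbhd_graph (setprod_pow V 5) G `` A \<subseteq> A" "\<rho> \<in> A" "-\<rho> \<in> setprod_pow V 2"
  shows "A = G"
proof -
  have "h \<in> A" if "h \<in> G" for h
  proof -
    have "open ((\<lambda>w. h + w) ` setprod_pow V 2)" "h \<in> (\<lambda>w. h + w) ` setprod_pow V 2"
      using V by (simp_all add: open_left_translation open_setprod_pow mem_translation_iff
          zero_mem_setprod_pow)
    moreover have "h \<in> closure (setprod_pow V (Suc N))"
      using G(1) that by blast
    ultimately have "(\<lambda>w. h + w) ` setprod_pow V 2 \<inter> setprod_pow V (Suc N) \<noteq> {}"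
      using open_Int_closure_eq_empty by blast
    then obtain w where w: "w \<in> setprod_pow V 2" "h + w \<in> setprod_pow V (Suc N)"
      by blast
    then have "h + w \<in> setprod A (setprod_pow V 2)"
      using setprod_pow_subset_closed_cells[OF V(2,3) G(2) A order_refl] by blast
    then obtain g where g: "g \<in> A" "-g + (h + w) \<in> setprod_pow V 2"
      by (auto simp: mem_setprod_iff)
    have "-w \<in> setprod_pow V 2"
      using w(1) setprod_pow_uminus V(3) by blast
    with g(2) have "(-g + (h + w)) + -w \<in> setprod_pow V 4"
      by (rule setprod_pow_add) simp
    moreover have "(-g + (h + w)) + -w = -g + h"
      by (metis add.assoc add.right_inverse add.right_neutral)
    ultimately have "-g + h \<in> setprod_pow V 5"
      using setprod_pow_mono[OF V(2), of 4 5] by auto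
    then show "h \<in> A"
      using A(1,2) g(1) that by (auto simp: nbhd_graph_def)
  qed
  then show ?thesis
    using A(1) by blast
qed

lemma nbhd_graph_connected:
  fixes V :: "'a::topological_group_add set"
  assumes V: "open V" "0 \<in> V" "\<forall>v\<in>V. -v \<in> V"
    and G: "G \<subseteq> closure (setprod_pow V (Suc N))" "closure (setprod_pow V (Suc N)) \<subseteq> setprod G (setprod_pow V 2)"
  shows "\<forall>A\<subseteq>G. A \<noteq> {} \<longrightarrow> nbhd_graph (setprod_pow V 5) G `` A \<subseteq> A \<longrightarrow> A = G"
proof (intro allI impI)
  fix A assume A: "A \<subseteq> G" "A \<noteq> {}" "nbhd_graph (setprod_pow V 5) G `` A \<subseteq> A"
  let ?E = "nbhd_graph (setprod_pow V 5) G"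
  have "0 \<in> setprod G (setprod_pow V 2)"
    using G(2) closure_subset zero_mem_setprod_pow[OF V(2)] by blast
  then obtain \<rho> where \<rho>: "\<rho> \<in> G" "-\<rho> \<in> setprod_pow V 2"
    by (auto simp: mem_setprod_iff)
  show "A = G"
  proof (cases "\<rho> \<in> A")
    case True
    show ?thesis
      using nbhd_graph_closed_eq[OF V G A(1,3) True \<rho>(2)] .
  next
    case False
    have "?E `` (G - A) \<subseteq> G - A"
    proof
      fix h assume "h \<in> ?E `` (G - A)"
      then obtain g where g: "g \<in> G - A" "(g, h) \<in> ?E"
        by blast
      then have "(h, g) \<in> ?E" "h \<in> G"
        using nbhd_graph_sym[OF V(3)] by (auto simp: nbhd_graph_def)
      then show "h \<in> G - A"
        using A(3) g(1) by blast
    qed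
    then have "G - A = G"
      using nbhd_graph_closed_eq[OF V G _ _ _ \<rho>(2)] \<rho>(1) False by blast
    then show ?thesis
      using A(1,2) by blast
  qed
qed

lemma disjoint_family_on_subset:
  "disjoint_family_on A I \<Longrightarrow> \<forall>i\<in>I. B i \<subseteq> A i \<Longrightarrow> disjoint_family_on B I"
  unfolding disjoint_family_on_def by blast

lemma measure_UN_disjoint_fmeasurable:
  assumes "finite I" "disjoint_family_on A I" "\<forall>i\<in>I. A i \<in> fmeasurable M"
  shows "measure M (\<Union>i\<in>I. A i) = (\<Sum>i\<in>I. measure M (A i))"
  using assms by (intro measure_finite_Union) (auto dest: fmeasurableD2)

definition hall_cover :: "'a::plus measure \<Rightarrow> 'a set \<Rightarrow> 'a set \<Rightarrow> 'a set \<Rightarrow> bool" where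
  "hall_cover \<nu> U C F \<longleftrightarrow> finite F \<and> F \<subseteq> C \<and> C \<subseteq> setprod F U \<and>
     (\<forall>I. I \<subseteq> F \<longrightarrow> measure \<nu> (setprod I U \<inter> C) \<ge> real (card I) / real (card F) * measure \<nu> C)"

lemma card_le_sum_card_meeting:
  assumes "finite G" "\<forall>g\<in>G. finite (Fc g)" "I \<subseteq> (\<Union>g\<in>G. Fc g)"
  shows "card I \<le> (\<Sum>g\<in>{g \<in> G. I \<inter> Fc g \<noteq> {}}. card (Fc g))"
proof -
  let ?A = "{g \<in> G. I \<inter> Fc g \<noteq> {}}"
  have "I \<subseteq> (\<Union>g\<in>?A. Fc g)"
    using assms(3) by fastforce
  then have "card I \<le> card (\<Union>g\<in>?A. Fc g)"
    using assms(1,2) by (intro card_mono) auto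
  also have "\<dots> \<le> (\<Sum>g\<in>?A. card (Fc g))"
    using assms(1) by (intro card_UN_le) auto
  finally show ?thesis .
qed

lemma measure_adjacent_cells_le:
  fixes \<nu> :: "'a::topological_group_add measure"
  assumes "sets \<nu> = sets borel" "open U" "D \<in> fmeasurable \<nu>"
    and G: "finite G" "E \<subseteq> G \<times> G"
    and Q: "disjoint_family_on Q G" "(\<Union>g\<in>G. Q g) = D" "\<forall>g\<in>G. Q g \<in> sets \<nu>"
    and covers: "\<forall>g h f. (g, h) \<in> E \<longrightarrow> f \<in> Fc g \<longrightarrow> Q h \<subseteq> setprod {f} U"
  shows "(\<Sum>h\<in>E `` {g \<in> G. I \<inter> Fc g \<noteq> {}}. measure \<nu> (Q h)) \<le> measure \<nu> (setprod I U \<inter> D)"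
proof -
  let ?H = "E `` {g \<in> G. I \<inter> Fc g \<noteq> {}}"
  have "finite ?H" "?H \<subseteq> G"
    using G by (auto intro: finite_subset)
  moreover have Q_fm: "\<forall>g\<in>G. Q g \<in> fmeasurable \<nu>"
    using Q(2,3) \<open>D \<in> fmeasurable \<nu>\<close> by (blast intro: fmeasurableI2)
  ultimately have "(\<Sum>h\<in>?H. measure \<nu> (Q h)) = measure \<nu> (\<Union>h\<in>?H. Q h)"
    using Q(1) by (intro measure_UN_disjoint_fmeasurable[symmetric]) (auto intro: disjoint_family_on_mono)
  also have "\<dots> \<le> measure \<nu> (setprod I U \<inter> D)"
  proof (rule measure_mono_fmeasurable)
    show "(\<Union>h\<in>?H. Q h) \<subseteq> setprod I U \<inter> D"
    proof
      fix x assume "x \<in> (\<Union>h\<in>?H. Q h)"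
      then obtain g h f where gh: "(g, h) \<in> E" "x \<in> Q h" "f \<in> I" "f \<in> Fc g"
        by blast
      then have "-f + x \<in> U"
        using covers by (force simp: mem_setprod_iff)
      moreover have "x \<in> D"
        using Q(2) G(2) gh(1,2) by blast
      ultimately show "x \<in> setprod I U \<inter> D"
        using gh(3) by (auto simp: mem_setprod_iff)
    qed
    show "(\<Union>h\<in>?H. Q h) \<in> sets \<nu>"
      using \<open>finite ?H\<close> \<open>?H \<subseteq> G\<close> Q(3) by (intro sets.finite_UN) auto
    have "setprod I U \<in> sets \<nu>"
      using assms(1) open_setprod[OF assms(2)] by (simp add: borel_open)
    then show "setprod I U \<inter> D \<in> fmeasurable \<nu>"
      using fmeasurableD[OF \<open>D \<in> fmeasurable \<nu>\<close>]
      by (intro fmeasurableI2[OF \<open>D \<in> fmeasurable \<nu>\<close>] sets.Int) auto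
  qed
  finally show ?thesis .
qed

lemma hall_cover_of_cells:
  fixes \<nu> :: "'a::topological_group_add measure"
  assumes "sets \<nu> = sets borel" "open U" "D \<in> fmeasurable \<nu>"
    and G: "finite G" "E \<subseteq> G \<times> G" "\<forall>g\<in>G. (g, g) \<in> E"
    and Q: "disjoint_family_on Q G" "(\<Union>g\<in>G. Q g) = D" "\<forall>g\<in>G. Q g \<in> sets \<nu>"
    and Fc: "disjoint_family_on Fc G" "\<forall>g\<in>G. finite (Fc g) \<and> Fc g \<noteq> {} \<and> Fc g \<subseteq> D"
    and covers: "\<forall>g h f. (g, h) \<in> E \<longrightarrow> f \<in> Fc g \<longrightarrow> Q h \<subseteq> setprod {f} U"
    and hall: "\<forall>A\<subseteq>G. real (\<Sum>g\<in>A. card (Fc g)) * (measure \<nu> D / (\<Sum>g\<in>G. card (Fc g)))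
                \<le> (\<Sum>h\<in>E `` A. measure \<nu> (Q h))"
  shows "hall_cover \<nu> U D (\<Union>g\<in>G. Fc g)"
proof -
  define F where "F = (\<Union>g\<in>G. Fc g)"
  have card_F: "card F = (\<Sum>g\<in>G. card (Fc g))"
    unfolding F_def using Fc G(1) by (intro card_UN_disjoint') auto
  have "D \<subseteq> setprod F U"
  proof
    fix x assume "x \<in> D"
    then obtain h where "h \<in> G" "x \<in> Q h"
      using Q(2) by blast
    moreover obtain f where "f \<in> Fc h"
      using Fc(2) \<open>h \<in> G\<close> by blast
    ultimately show "x \<in> setprod F U"
      using covers G(3) by (force simp: F_def mem_setprod_iff)
  qed
  moreover have "measure \<nu> (setprod I U \<inter> D) \<ge> real (card I) / real (card F) * measure \<nu> D"
    if "I \<subseteq> F" for I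
  proof -
    let ?A = "{g \<in> G. I \<inter> Fc g \<noteq> {}}"
    have "card I \<le> (\<Sum>g\<in>?A. card (Fc g))"
      using G(1) Fc(2) that by (intro card_le_sum_card_meeting) (auto simp: F_def)
    then have "real (card I) / real (card F) * measure \<nu> D
        \<le> real (\<Sum>g\<in>?A. card (Fc g)) * (measure \<nu> D / (\<Sum>g\<in>G. card (Fc g)))"
      by (simp add: card_F divide_right_mono mult_right_mono del: of_nat_sum)
    also have "\<dots> \<le> (\<Sum>h\<in>E `` ?A. measure \<nu> (Q h))"
      using hall by simp
    also have "\<dots> \<le> measure \<nu> (setprod I U \<inter> D)"
      by (rule measure_adjacent_cells_le[OF assms(1-3) G(1,2) Q covers])
    finally show ?thesis .
  qed
  moreover have "finite F" "F \<subseteq> D"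
    using G(1) Fc(2) by (auto simp: F_def)
  ultimately show ?thesis
    by (simp add: hall_cover_def F_def)
qed

lemma disjoint_family_on_separated_translates:
  fixes V :: "'a::group_add set"
  assumes "\<forall>v\<in>V. -v \<in> V" "\<forall>g\<in>G. \<forall>h\<in>G. g \<noteq> h \<longrightarrow> -g + h \<notin> setprod_pow V 2"
  shows "disjoint_family_on (\<lambda>g. (\<lambda>v. g + v) ` V) G"
  unfolding disjoint_family_on_def
proof (intro ballI impI equals0I)
  fix g h x assume gh: "g \<in> G" "h \<in> G" "g \<noteq> h" and "x \<in> (\<lambda>v. g + v) ` V \<inter> (\<lambda>v. h + v) ` V"
  then have "-g + x \<in> setprod_pow V 1" "-(-h + x) \<in> setprod_pow V 1"
    using assms(1) by (auto simp: mem_translation_iff)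
  then have "(-g + x) + -(-h + x) \<in> setprod_pow V 2"
    by (rule setprod_pow_add) simp
  then show False
    using assms(2) gh by (simp add: minus_add add.assoc)
qed

lemma nbhd_graph_cells_subset_setprod:
  fixes V U :: "'a::group_add set"
  assumes "\<forall>v\<in>V. -v \<in> V" "setprod_pow V 8 \<subseteq> U"
    and "\<forall>g\<in>G. Q g \<subseteq> (\<lambda>w. g + w) ` setprod_pow V 2" "\<forall>g\<in>G. Fc g \<subseteq> (\<lambda>v. g + v) ` V"
  shows "\<forall>g h f. (g, h) \<in> nbhd_graph (setprod_pow V 5) G \<longrightarrow> f \<in> Fc g \<longrightarrow> Q h \<subseteq> setprod {f} U"
proof (intro allI impI subsetI)
  fix g h f x assume gh: "(g, h) \<in> nbhd_graph (setprod_pow V 5) G" "f \<in> Fc g" "x \<in> Q h"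
  then have "g \<in> G" "h \<in> G" and gh5: "-g + h \<in> setprod_pow V 5"
    by (auto simp: nbhd_graph_def)
  then have "Fc g \<subseteq> (\<lambda>v. g + v) ` V" "Q h \<subseteq> (\<lambda>w. h + w) ` setprod_pow V 2"
    using assms(3,4) by blast+
  with gh(2,3) have diffs: "-g + f \<in> V" "-h + x \<in> setprod_pow V 2"
    by (auto simp: mem_translation_iff)
  have "-(-g + f) + (-g + h) \<in> setprod_pow V 6"
    by (rule setprod_pow_add[of _ V 1 _ 5]) (use assms(1) gh5 diffs(1) in auto)
  then have "(-(-g + f) + (-g + h)) + (-h + x) \<in> setprod_pow V 8"
    using diffs(2) by (rule setprod_pow_add) simp
  then have "-f + x \<in> U"
    using assms(2) by (auto simp: minus_add add.assoc)
  then show "x \<in> setprod {f} U"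
    by (simp add: mem_setprod_iff)
qed

lemma exists_cells:
  fixes S V :: "'a::{topological_group_add,t2_space} set"
  assumes "compact (closure S)" "open S" and V: "open V" "0 \<in> V" "\<forall>v\<in>V. -v \<in> V"
  obtains G Q where "finite G" "G \<subseteq> closure S" "closure S \<subseteq> setprod G (setprod_pow V 2)"
    "disjoint_family_on Q G" "(\<Union>g\<in>G. Q g) = closure S"
    "\<forall>g\<in>G. Q g \<in> sets borel \<and> Q g \<subseteq> (\<lambda>w. g + w) ` setprod_pow V 2"
    "disjoint_family_on (\<lambda>g. S \<inter> (\<lambda>v. g + v) ` V) G"
    "\<forall>g\<in>G. open (S \<inter> (\<lambda>v. g + v) ` V) \<and> S \<inter> (\<lambda>v. g + v) ` V \<noteq> {} \<and> S \<inter> (\<lambda>v. g + v) ` V \<subseteq> Q g"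
proof -
  obtain G where G: "finite G" "G \<subseteq> closure S" "closure S \<subseteq> setprod G (setprod_pow V 2)"
    and sep: "\<forall>g\<in>G. \<forall>h\<in>G. g \<noteq> h \<longrightarrow> -g + h \<notin> setprod_pow V 2"
    by (rule exists_separated_cover[OF assms(1) V])
  define P where "P g = (\<lambda>v. g + v) ` V" for g
  define W where "W g = (\<lambda>w. g + w) ` setprod_pow V 2" for g
  have P_disj: "disjoint_family_on P G"
    unfolding P_def using disjoint_family_on_separated_translates[OF V(3) sep] .
  have "V \<subseteq> setprod_pow V 2"
    using setprod_pow_mono[OF V(2), of 1 2] by simp
  then have PW: "\<forall>g\<in>G. P g \<in> sets borel \<and> W g \<in> sets borel \<and> P g \<subseteq> W g"
    using V by (auto simp: P_def W_def intro!: borel_open open_left_translation open_setprod_pow)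
  have W_cover: "closure S \<subseteq> (\<Union>g\<in>G. W g)"
    using G(3) by (auto simp: W_def mem_setprod_iff mem_translation_iff)
  obtain Q where Q: "disjoint_family_on Q G" "(\<Union>g\<in>G. Q g) = closure S"
    "\<forall>g\<in>G. Q g \<in> sets borel \<and> closure S \<inter> P g \<subseteq> Q g \<and> Q g \<subseteq> closure S \<inter> W g"
    by (rule exists_partition_between[OF G(1) borel_closed[OF closed_closure] PW P_disj W_cover])
  have Q_sub: "\<forall>g\<in>G. Q g \<in> sets borel \<and> Q g \<subseteq> W g"
    using Q(3) by blast
  have T_disj: "disjoint_family_on (\<lambda>g. S \<inter> P g) G"
    using P_disj by (rule disjoint_family_on_subset) blast
  have T: "\<forall>g\<in>G. open (S \<inter> P g) \<and> S \<inter> P g \<noteq> {} \<and> S \<inter> P g \<subseteq> Q g"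
  proof
    fix g assume "g \<in> G"
    then have "open (P g)" "g \<in> P g" "g \<in> closure S"
      using V G(2) by (auto simp: P_def open_left_translation mem_translation_iff)
    moreover have "S \<inter> P g \<subseteq> Q g"
      using Q(3) \<open>g \<in> G\<close> closure_subset[of S] by blast
    ultimately show "open (S \<inter> P g) \<and> S \<inter> P g \<noteq> {} \<and> S \<inter> P g \<subseteq> Q g"
      using \<open>open S\<close> open_Int_closure_eq_empty by blast
  qed
  show ?thesis
    by (rule that[OF G Q(1,2) Q_sub[unfolded W_def] T_disj[unfolded P_def] T[unfolded P_def]])
qed

lemma exists_hall_cover_closure_setprod_pow:
  fixes \<nu> :: "'a::{topological_group_add,t2_space} measure"
  assumes haar: "haar_measure \<nu>" and nd: "non_discrete TYPE('a)" and "open U"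
    and V: "open V" "0 \<in> V" "\<forall>v\<in>V. -v \<in> V" "setprod_pow V 8 \<subseteq> U"
    and D: "compact (closure (setprod_pow V (Suc N)))"
  shows "\<exists>F. hall_cover \<nu> U (closure (setprod_pow V (Suc N))) F"
proof -
  define S where "S = setprod_pow V (Suc N)"
  define T where "T g = S \<inter> (\<lambda>v. g + v) ` V" for g
  note D = D[folded S_def]
  have "open S" "0 \<in> S"
    using open_setprod_pow[OF V(1), of "Suc N"] zero_mem_setprod_pow[OF V(2), of "Suc N"]
    by (simp_all add: S_def)
  obtain G Q where G: "finite G" "G \<subseteq> closure S" "closure S \<subseteq> setprod G (setprod_pow V 2)"
    and Q: "disjoint_family_on Q G" "(\<Union>g\<in>G. Q g) = closure S"
      "\<forall>g\<in>G. Q g \<in> sets borel \<and> Q g \<subseteq> (\<lambda>w. g + w) ` setprod_pow V 2"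
    and T: "disjoint_family_on T G" "\<forall>g\<in>G. open (T g) \<and> T g \<noteq> {} \<and> T g \<subseteq> Q g"
    unfolding T_def by (rule exists_cells[OF D \<open>open S\<close> V(1-3)])
  have Q_fm: "\<forall>g\<in>G. Q g \<in> fmeasurable \<nu>"
    using Q(2,3) by (blast intro: fmeasurable_haar[OF haar D])
  have q_pos: "\<forall>g\<in>G. measure \<nu> (Q g) > 0"
  proof
    fix g assume "g \<in> G"
    then show "measure \<nu> (Q g) > 0"
      using Q(2,3) T(2) by (intro measure_haar_pos[OF haar, of "T g" "Q g" "closure S"] D) auto
  qed
  define E where "E = nbhd_graph (setprod_pow V 5) G"
  have E: "E \<subseteq> G \<times> G" "\<forall>g\<in>G. (g, g) \<in> E"
    using zero_mem_setprod_pow[OF V(2)] by (auto simp: E_def nbhd_graph_def)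
  have "G \<noteq> {}"
    using G(3) \<open>0 \<in> S\<close> closure_subset[of S] by (auto simp: setprod_def)
  from exists_hall_multiplicities[OF G(1) this q_pos E]
  obtain k where k: "\<forall>g\<in>G. 1 \<le> k g"
    "\<forall>A\<subseteq>G. real (sum k A) * ((\<Sum>g\<in>G. measure \<nu> (Q g)) / sum k G) \<le> (\<Sum>h\<in>E `` A. measure \<nu> (Q h))"
    using nbhd_graph_connected[OF V(1-3) G(2,3)[unfolded S_def], folded E_def] by blast
  have "\<forall>g\<in>G. \<exists>B. finite B \<and> card B = k g \<and> B \<subseteq> T g"
    using T(2) infinite_open_non_discrete[OF nd] infinite_arbitrarily_large by blast
  then obtain Fc where Fc: "\<forall>g\<in>G. finite (Fc g) \<and> card (Fc g) = k g \<and> Fc g \<subseteq> T g"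
    by metis
  have "hall_cover \<nu> U (closure S) (\<Union>g\<in>G. Fc g)"
  proof (rule hall_cover_of_cells[OF sets_haar[OF haar] \<open>open U\<close> _ G(1) E Q(1,2)])
    show "closure S \<in> fmeasurable \<nu>"
      by (rule fmeasurable_haar[OF haar D order_refl borel_closed[OF closed_closure]])
    show "\<forall>g\<in>G. Q g \<in> sets \<nu>"
      using Q(3) sets_haar[OF haar] by simp
    show "disjoint_family_on Fc G"
      using Fc by (intro disjoint_family_on_subset[OF T(1)]) blast
    show "\<forall>g\<in>G. finite (Fc g) \<and> Fc g \<noteq> {} \<and> Fc g \<subseteq> closure S"
      using Fc k(1) T(2) Q(2) by (fastforce simp: card_gt_0_iff[symmetric])
    show "\<forall>g h f. (g, h) \<in> E \<longrightarrow> f \<in> Fc g \<longrightarrow> Q h \<subseteq> setprod {f} U"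
      unfolding E_def by (rule nbhd_graph_cells_subset_setprod[OF V(3,4)]) (use Q(3) Fc in \<open>auto simp: T_def\<close>)
    have "measure \<nu> (closure S) = (\<Sum>g\<in>G. measure \<nu> (Q g))"
      using measure_UN_disjoint_fmeasurable[OF G(1) Q(1) Q_fm] Q(2) by simp
    then show "\<forall>A\<subseteq>G. real (\<Sum>g\<in>A. card (Fc g)) * (measure \<nu> (closure S) / (\<Sum>g\<in>G. card (Fc g)))
        \<le> (\<Sum>h\<in>E `` A. measure \<nu> (Q h))"
      using k(2) Fc by (simp add: subset_iff)
  qed
  then show ?thesis
    unfolding S_def by blast
qed

lemma hall_cover_left_translation:
  fixes \<nu> :: "'a::{topological_group_add,t2_space} measure"
  assumes haar: "haar_measure \<nu>" and "open U" "compact C" "hall_cover \<nu> U C F"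
  shows "hall_cover \<nu> U ((\<lambda>y. x + y) ` C) ((\<lambda>y. x + y) ` F)"
proof -
  have inj: "inj_on (\<lambda>y. x + y) A" for A :: "'a set"
    by (simp add: inj_on_def)
  have measure_eq: "measure \<nu> ((\<lambda>y. x + y) ` (setprod J U \<inter> C)) = measure \<nu> (setprod J U \<inter> C)" for J
    using fmeasurable_haar_setprod_Int[OF haar assms(2,3)] sets_haar[OF haar]
    by (intro measure_haar_left_translation[OF haar]) auto
  have "measure \<nu> (setprod I U \<inter> (\<lambda>y. x + y) ` C)
      \<ge> real (card I) / real (card ((\<lambda>y. x + y) ` F)) * measure \<nu> ((\<lambda>y. x + y) ` C)"
    if I: "I \<subseteq> (\<lambda>y. x + y) ` F" for I
  proof -
    obtain J where J: "J \<subseteq> F" "I = (\<lambda>y. x + y) ` J"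
      using I by (auto simp: subset_image_iff)
    have "setprod I U \<inter> (\<lambda>y. x + y) ` C = (\<lambda>y. x + y) ` (setprod J U \<inter> C)"
      by (simp add: J(2) image_Int[OF inj] left_translation_setprod)
    moreover have "measure \<nu> ((\<lambda>y. x + y) ` C) = measure \<nu> C"
      using assms(3) by (intro measure_haar_left_translation[OF haar] borel_closed compact_imp_closed)
    ultimately show ?thesis
      using assms(4) J by (simp add: hall_cover_def measure_eq card_image[OF inj])
  qed
  with assms(4) show ?thesis
    by (auto simp: hall_cover_def left_translation_setprod[symmetric])
qed

lemma hall_cover_UN_disjoint:
  fixes \<nu> :: "'a::{topological_group_add,t2_space} measure"
  assumes haar: "haar_measure \<nu>" and "open U" "finite X" "disjoint_family_on C X"
    and pieces: "\<forall>x\<in>X. compact (C x) \<and> hall_cover \<nu> U (C x) (F x)"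
    and uniform: "\<forall>x\<in>X. card (F x) = c \<and> measure \<nu> (C x) = m"
  shows "hall_cover \<nu> U (\<Union>x\<in>X. C x) (\<Union>x\<in>X. F x)"
proof -
  have F_sub: "\<forall>x\<in>X. finite (F x) \<and> F x \<subseteq> C x"
    using pieces by (simp add: hall_cover_def)
  have card_UN: "card (\<Union>x\<in>X. I x) = (\<Sum>x\<in>X. card (I x))" if "\<forall>x\<in>X. I x \<subseteq> F x" for I
    using disjoint_family_on_subset[OF \<open>disjoint_family_on C X\<close>, of I] that F_sub \<open>finite X\<close>
    by (intro card_UN_disjoint') (auto intro: finite_subset)
  have C_fm: "\<forall>x\<in>X. C x \<in> fmeasurable \<nu>"
    using pieces by (auto intro: fmeasurable_haar[OF haar] borel_closed compact_imp_closed)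
  have compact_UN_C: "compact (\<Union>x\<in>X. C x)"
    using pieces \<open>finite X\<close> by (auto intro: compact_UN)
  have "measure \<nu> (setprod I U \<inter> (\<Union>x\<in>X. C x))
      \<ge> real (card I) / real (card (\<Union>x\<in>X. F x)) * measure \<nu> (\<Union>x\<in>X. C x)"
    if I: "I \<subseteq> (\<Union>x\<in>X. F x)" for I
  proof -
    define J where "J x = I \<inter> F x" for x
    have "(\<Union>x\<in>X. J x) = I"
      using I by (auto simp: J_def)
    then have card_I: "card I = (\<Sum>x\<in>X. card (J x))"
      using card_UN[of J] by (simp add: J_def)
    have J_fm: "\<forall>x\<in>X. setprod (J x) U \<inter> C x \<in> fmeasurable \<nu>"
      using pieces \<open>open U\<close> by (simp add: fmeasurable_haar_setprod_Int[OF haar])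
    have "card (\<Union>x\<in>X. F x) = card X * c" "measure \<nu> (\<Union>x\<in>X. C x) = card X * m"
      using card_UN[of F] measure_UN_disjoint_fmeasurable[OF \<open>finite X\<close> \<open>disjoint_family_on C X\<close> C_fm]
        uniform by simp_all
    then have "real (card I) / real (card (\<Union>x\<in>X. F x)) * measure \<nu> (\<Union>x\<in>X. C x)
        = (\<Sum>x\<in>X. real (card (J x)) / real c * m)"
      using card_I I \<open>finite X\<close> by (cases "X = {}")
        (auto simp: sum_divide_distrib[symmetric] sum_distrib_right[symmetric])
    also have "\<dots> \<le> (\<Sum>x\<in>X. measure \<nu> (setprod (J x) U \<inter> C x))"
      using pieces uniform by (intro sum_mono) (auto simp: hall_cover_def J_def)
    also have "\<dots> = measure \<nu> (\<Union>x\<in>X. setprod (J x) U \<inter> C x)"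
      using disjoint_family_on_subset[OF \<open>disjoint_family_on C X\<close>] J_fm
      by (intro measure_UN_disjoint_fmeasurable[symmetric, OF \<open>finite X\<close>]) auto
    also have "\<dots> \<le> measure \<nu> (setprod I U \<inter> (\<Union>x\<in>X. C x))"
    proof (rule measure_mono_fmeasurable)
      show "(\<Union>x\<in>X. setprod (J x) U \<inter> C x) \<subseteq> setprod I U \<inter> (\<Union>x\<in>X. C x)"
        by (auto simp: J_def setprod_def)
      show "(\<Union>x\<in>X. setprod (J x) U \<inter> C x) \<in> sets \<nu>"
        using J_fm \<open>finite X\<close> by (intro sets.finite_UN) auto
    qed (rule fmeasurable_haar_setprod_Int[OF haar \<open>open U\<close> compact_UN_C])
    finally show ?thesis .
  qed
  moreover have "(\<Union>x\<in>X. C x) \<subseteq> setprod (\<Union>x\<in>X. F x) U"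
    using pieces by (fastforce simp: hall_cover_def setprod_def)
  moreover have "finite (\<Union>x\<in>X. F x)" "(\<Union>x\<in>X. F x) \<subseteq> (\<Union>x\<in>X. C x)"
    using F_sub \<open>finite X\<close> by blast+
  ultimately show ?thesis
    unfolding hall_cover_def by blast
qed

text \<open>For symmetric \<open>V\<close>, \<open>\<forall>n. -x + y \<notin> V\<^sup>n\<close> says that \<open>x\<close> and \<open>y\<close> lie in different cosets of the
  subgroup generated by \<open>V\<close>. A new translate of \<open>V\<close> is either absorbed into a translate of a larger
  power by an already chosen point of its coset, or it opens a new coset.\<close>

lemma exists_inequivalent_translates_cover:
  fixes V :: "'a::group_add set"
  assumes "0 \<in> V" "\<forall>v\<in>V. -v \<in> V" "finite X0"
  shows "\<exists>X N. finite X \<and> setprod X0 V \<subseteq> setprod X (setprod_pow V N) \<and>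
           (\<forall>x\<in>X. \<forall>y\<in>X. x \<noteq> y \<longrightarrow> (\<forall>n. -x + y \<notin> setprod_pow V n))"
  using assms(3)
proof (induction X0 rule: finite_induct)
  case empty
  show ?case
    by (intro exI[of _ "{}"]) (simp add: setprod_def)
next
  case (insert a X0)
  from insert.IH obtain X N where X: "finite X" "setprod X0 V \<subseteq> setprod X (setprod_pow V N)"
    and inequiv: "\<forall>x\<in>X. \<forall>y\<in>X. x \<noteq> y \<longrightarrow> (\<forall>n. -x + y \<notin> setprod_pow V n)"
    by (elim exE conjE) (rule that)
  have mono: "setprod X (setprod_pow V N) \<subseteq> setprod X (setprod_pow V N')" if "N \<le> N'" for N'
    using setprod_pow_mono[OF assms(1) that] by (rule setprod_mono[OF order_refl])
  show ?case
  proof (cases "\<exists>x\<in>X. \<exists>m. -x + a \<in> setprod_pow V m")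
    case True
    then obtain x m where x: "x \<in> X" "-x + a \<in> setprod_pow V m"
      by blast
    have "setprod {a} V \<subseteq> setprod X (setprod_pow V (max N (Suc m)))"
    proof
      fix y assume "y \<in> setprod {a} V"
      then have "-a + y \<in> setprod_pow V 1"
        by (simp add: mem_setprod_iff)
      with x(2) have "(-x + a) + (-a + y) \<in> setprod_pow V (Suc m)"
        by (rule setprod_pow_add) simp
      then have "-x + y \<in> setprod_pow V (max N (Suc m))"
        using setprod_pow_mono[OF assms(1), of "Suc m" "max N (Suc m)"] by (auto simp: add.assoc)
      then show "y \<in> setprod X (setprod_pow V (max N (Suc m)))"
        using x(1) by (auto simp: mem_setprod_iff)
    qed
    then have "setprod (insert a X0) V \<subseteq> setprod X (setprod_pow V (max N (Suc m)))"
      using X(2) mono[OF max.cobounded1] unfolding setprod_insert[of a X0] by blast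
    then show ?thesis
      using X(1) inequiv by blast
  next
    case False
    have "setprod {a} V \<subseteq> setprod {a} (setprod_pow V (max N 1))"
      using setprod_pow_mono[OF assms(1), of 1 "max N 1"] by (intro setprod_mono) auto
    then have "setprod (insert a X0) V \<subseteq> setprod (insert a X) (setprod_pow V (max N 1))"
      using X(2) mono[OF max.cobounded1] setprod_mono[of X "insert a X"]
      unfolding setprod_insert[of a X0] setprod_insert[of a X] by blast
    moreover have "\<forall>x\<in>insert a X. \<forall>y\<in>insert a X. x \<noteq> y \<longrightarrow> (\<forall>n. -x + y \<notin> setprod_pow V n)"
      using False inequiv setprod_pow_uminus[OF assms(2)] by (fastforce simp: minus_add)
    ultimately show ?thesis
      using X(1) by blast
  qed
qed

lemma compact_subset_inequivalent_translates:
  fixes B V :: "'a::topological_group_add set"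
  assumes "compact B" "open V" "0 \<in> V" "\<forall>v\<in>V. -v \<in> V"
  obtains X N where "finite X" "B \<subseteq> setprod X (setprod_pow V N)"
    "\<forall>x\<in>X. \<forall>y\<in>X. x \<noteq> y \<longrightarrow> (\<forall>n. -x + y \<notin> setprod_pow V n)"
proof -
  obtain X0 where X0: "finite X0" "B \<subseteq> setprod X0 V"
    by (rule compact_imp_finite_setprod_cover[OF assms(1-3)])
  from exists_inequivalent_translates_cover[OF assms(3,4) X0(1)] obtain X N where
    "finite X" "setprod X0 V \<subseteq> setprod X (setprod_pow V N)"
    "\<forall>x\<in>X. \<forall>y\<in>X. x \<noteq> y \<longrightarrow> (\<forall>n. -x + y \<notin> setprod_pow V n)"
    by (elim exE conjE) (rule that)
  with X0(2) show ?thesis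
    using that by (meson order_trans)
qed

lemma disjoint_family_on_inequivalent_translates:
  fixes V :: "'a::group_add set"
  assumes "\<forall>v\<in>V. -v \<in> V" "\<forall>x\<in>X. \<forall>y\<in>X. x \<noteq> y \<longrightarrow> (\<forall>n. -x + y \<notin> setprod_pow V n)"
    and "D \<subseteq> setprod_pow V m"
  shows "disjoint_family_on (\<lambda>x. (\<lambda>d. x + d) ` D) X"
  unfolding disjoint_family_on_def
proof (intro ballI impI equals0I)
  fix x y z assume xy: "x \<in> X" "y \<in> X" "x \<noteq> y" and "z \<in> (\<lambda>d. x + d) ` D \<inter> (\<lambda>d. y + d) ` D"
  then have "-x + z \<in> setprod_pow V m" "-(-y + z) \<in> setprod_pow V m"
    using assms(3) setprod_pow_uminus[OF assms(1)] by (auto simp: mem_translation_iff)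
  then have "(-x + z) + -(-y + z) \<in> setprod_pow V (m + m)"
    by (rule setprod_pow_add) simp
  then show False
    using assms(2) xy by (auto simp: minus_add add.assoc)
qed

lemma hall_cover_UN_translates:
  fixes \<nu> :: "'a::{topological_group_add,t2_space} measure"
  assumes haar: "haar_measure \<nu>" and "open U" "compact D" "hall_cover \<nu> U D F" "finite X"
    and "disjoint_family_on (\<lambda>x. (\<lambda>d. x + d) ` D) X"
  shows "hall_cover \<nu> U (\<Union>x\<in>X. (\<lambda>d. x + d) ` D) (\<Union>x\<in>X. (\<lambda>f. x + f) ` F)"
proof (rule hall_cover_UN_disjoint[OF haar \<open>open U\<close> \<open>finite X\<close> assms(6)])
  show "\<forall>x\<in>X. compact ((\<lambda>d. x + d) ` D) \<and> hall_cover \<nu> U ((\<lambda>d. x + d) ` D) ((\<lambda>f. x + f) ` F)"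
    using assms(2-4) by (simp add: compact_left_translation hall_cover_left_translation[OF haar])
  have "D \<in> sets borel"
    using \<open>compact D\<close> by (simp add: borel_closed compact_imp_closed)
  then show "\<forall>x\<in>X. card ((\<lambda>f. x + f) ` F) = card F \<and> measure \<nu> ((\<lambda>d. x + d) ` D) = measure \<nu> D"
    by (simp add: card_image inj_on_def measure_haar_left_translation[OF haar])
qed

lemma exists_symmetric_nhd_compact_setprod_pow:
  fixes U :: "'a::{topological_group_add,t2_space} set"
  assumes "locally_compact_group TYPE('a)" "open U" "0 \<in> U" "0 < n"
  obtains V K where "open V" "0 \<in> V" "\<forall>v\<in>V. -v \<in> V" "setprod_pow V n \<subseteq> U" "compact K" "V \<subseteq> K"
proof -
  have "\<exists>V0 K0. open V0 \<and> compact K0 \<and> (0::'a) \<in> V0 \<and> V0 \<subseteq> K0"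
    using assms(1) unfolding locally_compact_group_def by (rule spec)
  then obtain V0 K0 :: "'a set" where K0: "open V0" "compact K0" "0 \<in> V0" "V0 \<subseteq> K0"
    by blast
  obtain V where V: "open V" "0 \<in> V" "\<forall>v\<in>V. -v \<in> V" "setprod_pow V n \<subseteq> U \<inter> V0"
    using exists_symmetric_nhd_setprod_pow[of "U \<inter> V0" n] assms(2,3) K0(1,3) by (auto intro: open_Int)
  moreover have "V \<subseteq> K0"
    using setprod_pow_mono[OF V(2), of 1 n] assms(4) V(4) K0(4) by auto
  ultimately show ?thesis
    using that K0(2) by blast
qed

lemma compact_closure_setprod_pow:
  fixes V K :: "'a::{topological_group_add,t2_space} set"
  assumes "compact K" "V \<subseteq> K"
  shows "compact (closure (setprod_pow V n))"
proof -
  have "closure (setprod_pow V n) \<subseteq> setprod_pow K n"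
    using setprod_pow_mono_set[OF assms(2)]
    by (rule closure_minimal[OF _ compact_imp_closed[OF compact_setprod_pow[OF assms(1)]]])
  moreover have "compact (setprod_pow K n \<inter> closure (setprod_pow V n))"
    by (rule compact_Int_closed[OF compact_setprod_pow[OF assms(1)] closed_closure])
  ultimately show ?thesis
    by (simp add: Int_absorb1)
qed

theorem lemma6:
  fixes \<nu> :: "'a::{topological_group_add,t2_space} measure"
    and B U :: "'a set"
  assumes "locally_compact_group TYPE('a)"
    and "non_discrete TYPE('a)"
    and "unimodular_haar \<nu>"
    and "compact B"
    and "open U" and "0 \<in> U"
  shows "\<exists>C F. compact C \<and> B \<subseteq> C \<and> finite F \<and> F \<subseteq> C \<and> C \<subseteq> setprod F U \<and>
           (\<forall>I. I \<subseteq> F \<longrightarrow>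
              measure \<nu> (setprod I U \<inter> C) \<ge> real (card I) / real (card F) * measure \<nu> C)"
proof -
  have haar: "haar_measure \<nu>"
    using assms(3) unfolding unimodular_haar_def by (rule conjunct1)
  obtain V K where V: "open V" "0 \<in> V" "\<forall>v\<in>V. -v \<in> V" "setprod_pow V 8 \<subseteq> U"
    and K: "compact K" "V \<subseteq> K"
    by (rule exists_symmetric_nhd_compact_setprod_pow[OF assms(1,5,6), of 8]) simp
  obtain X N where X: "finite X" "B \<subseteq> setprod X (setprod_pow V N)"
    and inequiv: "\<forall>x\<in>X. \<forall>y\<in>X. x \<noteq> y \<longrightarrow> (\<forall>n. -x + y \<notin> setprod_pow V n)"
    by (rule compact_subset_inequivalent_translates[OF assms(4) V(1-3)])
  define D where "D = closure (setprod_pow V (Suc N))"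
  have "compact D"
    unfolding D_def using K by (rule compact_closure_setprod_pow)
  obtain F0 where F0: "hall_cover \<nu> U D F0"
    using exists_hall_cover_closure_setprod_pow[OF haar assms(2,5) V] \<open>compact D\<close> unfolding D_def by blast
  define C where "C = (\<Union>x\<in>X. (\<lambda>d. x + d) ` D)"
  define F where "F = (\<Union>x\<in>X. (\<lambda>f. x + f) ` F0)"
  have "D \<subseteq> setprod_pow V (Suc (Suc N))"
    unfolding D_def using V(1-3) by (rule closure_setprod_pow_subset)
  then have "disjoint_family_on (\<lambda>x. (\<lambda>d. x + d) ` D) X"
    by (rule disjoint_family_on_inequivalent_translates[OF V(3) inequiv])
  then have "hall_cover \<nu> U C F"
    unfolding C_def F_def using \<open>compact D\<close> F0 X(1) by (intro hall_cover_UN_translates[OF haar assms(5)])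
  moreover have "setprod_pow V N \<subseteq> D"
    unfolding D_def using setprod_pow_mono[OF V(2), of N "Suc N"] closure_subset by fastforce
  then have "B \<subseteq> C"
    using X(2) setprod_mono[OF order_refl, of "setprod_pow V N" D X] by (auto simp: C_def setprod_eq_UN)
  moreover have "compact C"
    unfolding C_def using X(1) \<open>compact D\<close> by (auto intro!: compact_UN compact_left_translation)
  ultimately show ?thesis
    unfolding hall_cover_def by blast
qed

end
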